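(* For every $c\geq1$ let $L_c=(1,1,c)$. Then for every $n>2$, $\lim_{c\to\infty}\rho_{n,L_c}=\frac{n-2}{n}$.
   Context: Let $X$ be a finite alphabet with $n\geq 2$ letters and $X^*$ the set of words over $X$; $|v|$ is the length of a word $v$. A code over $X$ is a finite sequence $C=(v_1,\ldots,v_m)$ of words over $X$ such that every $w\in X^*$ has at most one factorization into code-words: if $w=v_{i_1}\cdots v_{i_l}=v_{j_1}\cdots v_{j_{l'}}$ with $l,l'\geq1$, then $l=l'$ and $i_t=j_t$ for all $t$. (Codes are sequences, not sets.) A code $C=(v_1,\ldots,v_m)$ is a prefix code if for all $i,j$, $v_i$ is a prefix of $v_j$ if and only if $i=j$. For a finite sequence $L=(a_1,\ldots,a_m)$ of positive integers, $UD_n(L)$ is the set of all codes $(v_1,\ldots,v_m)$ over an $n$-letter alphabet with $|v_i|=a_i$ for all $i$, $PR_n(L)\subseteq UD_n(L)$ is the subset of prefix codes, and $\rho_{n,L}=|PR_n(L)|/|UD_n(L)|$ (defined when $UD_n(L)\ne\emptyset$). *)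

theory Defs
  imports "HOL-Analysis.Analysis" "HOL-Library.Sublist"
begin

definition word_over :: "nat \<Rightarrow> nat list \<Rightarrow> bool" where
  "word_over n w \<longleftrightarrow> set w \<subseteq> {..<n}"

definition is_code :: "nat list list \<Rightarrow> bool" where
  "is_code C \<longleftrightarrow>
     (\<forall>is js. is \<noteq> [] \<longrightarrow> js \<noteq> [] \<longrightarrow>
        set is \<subseteq> {..<length C} \<longrightarrow> set js \<subseteq> {..<length C} \<longrightarrow>
        concat (map (\<lambda>i. C ! i) is) = concat (map (\<lambda>j. C ! j) js) \<longrightarrow> is = js)"

definition is_prefix_code :: "nat list list \<Rightarrow> bool" where
  "is_prefix_code C \<longleftrightarrow>
     (\<forall>i<length C. \<forall>j<length C. prefix (C ! i) (C ! j) \<longleftrightarrow> i = j)"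

definition UD :: "nat \<Rightarrow> nat list \<Rightarrow> nat list list set" where
  "UD n L = {C. length C = length L \<and> (\<forall>i<length L. length (C ! i) = L ! i)
              \<and> (\<forall>w\<in>set C. word_over n w) \<and> is_code C}"

definition PR :: "nat \<Rightarrow> nat list \<Rightarrow> nat list list set" where
  "PR n L = {C \<in> UD n L. is_prefix_code C}"

definition rho :: "nat \<Rightarrow> nat list \<Rightarrow> real" where
  "rho n L = real (card (PR n L)) / real (card (UD n L))"

end

theory Submission imports Defs begin

text \<open>A triple ([a], [b], w) is a code iff a \<noteq> b and w contains a letter x outside {a, b}:
  in any factorization, the longest prefix over {a, b} of the factorized word consists of the
  single-letter code words used before the first occurrence of w, followed by the part of w
  preceding its first such letter x, so factorizations can be decoded from the left.
  For nonempty w the triple is a prefix code iff moreover the first letter of w is outside {a, b}.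
  Counting gives |UD_n(1,1,c)| = n(n-1)(n^c - 2^c) and |PR_n(1,1,c)| = n(n-1)(n-2)n^(c-1), hence
  \<rho> = ((n-2)/n) / (1 - (2/n)^c), which tends to (n-2)/n.\<close>

lemma takeWhile_append_Cons_notin:
  "set xs \<subseteq> P \<Longrightarrow> x \<notin> P \<Longrightarrow> takeWhile (\<lambda>z. z \<in> P) (xs @ x # ys) = xs"
  by (induction xs) auto

lemma concat_letters:
  "set ks \<subseteq> {0, 1} \<Longrightarrow> concat (map ((!) [[a], [b], w]) ks) = map ((!) [a, b]) ks"
  by (induction ks) auto

lemma map_letters_eq_imp_eq:
  assumes "a \<noteq> b" "set ks \<subseteq> {0, 1}" "set ks' \<subseteq> {0, 1}"
    and "map ((!) [a, b]) ks = map ((!) [a, b]) ks'"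
  shows "ks = ks'"
proof -
  have "inj_on ((!) [a, b]) {0, 1}"
    using assms(1) by (simp add: inj_on_def)
  then have "inj_on ((!) [a, b]) (set ks \<union> set ks')"
    by (rule inj_on_subset) (use assms(2,3) in auto)
  then show ?thesis
    using assms(4) inj_on_map_eq_map by blast
qed

lemma letter_outside_iff_word_used:
  assumes "\<not> set w \<subseteq> {a, b}" "set is \<subseteq> {0, 1, 2}"
  shows "\<not> set (concat (map ((!) [[a], [b], w]) is)) \<subseteq> {a, b} \<longleftrightarrow> 2 \<in> set is"
proof -
  have letter: "set ([[a], [b], w] ! i) \<subseteq> {a, b} \<longleftrightarrow> i \<noteq> 2" if "i \<in> set is" for i
    using that assms by (auto elim!: insertE)
  have "set (concat (map ((!) [[a], [b], w]) is)) \<subseteq> {a, b}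
      \<longleftrightarrow> (\<forall>i\<in>set is. set ([[a], [b], w] ! i) \<subseteq> {a, b})"
    by (simp add: UN_subset_iff)
  then show ?thesis
    using letter by blast
qed

lemma takeWhile_concat_letters_word:
  assumes "set ks \<subseteq> {0, 1}" "w = u @ x # v" "set u \<subseteq> {a, b}" "x \<notin> {a, b}"
  shows "takeWhile (\<lambda>z. z \<in> {a, b}) (concat (map ((!) [[a], [b], w]) (ks @ 2 # r)))
           = map ((!) [a, b]) ks @ u"
proof -
  have "set (map ((!) [a, b]) ks @ u) \<subseteq> {a, b}"
    using assms(1,3) by auto
  from takeWhile_append_Cons_notin[OF this assms(4)] show ?thesis
    using assms(1,2) by (simp add: concat_letters)
qed

lemma split_at_first_2:
  assumes "2 \<in> set is" "set is \<subseteq> {0, 1, 2 :: nat}"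
  obtains ks r where "is = ks @ 2 # r" "set ks \<subseteq> {0, 1}" "set r \<subseteq> {0, 1, 2}"
proof -
  obtain ks r where "is = ks @ 2 # r" "2 \<notin> set ks"
    using split_list_first[OF assms(1)] by blast
  with assms(2) show thesis
    by (intro that) auto
qed

lemma letters_word_unique_decoding:
  assumes "a \<noteq> b" "\<not> set w \<subseteq> {a, b}"
  shows "set is \<subseteq> {0, 1, 2} \<Longrightarrow> set js \<subseteq> {0, 1, 2} \<Longrightarrow>
    concat (map ((!) [[a], [b], w]) is) = concat (map ((!) [[a], [b], w]) js) \<Longrightarrow> is = js"
proof (induction "length is" arbitrary: "is" js rule: less_induct)
  case less
  have used_iff: "2 \<in> set is \<longleftrightarrow> 2 \<in> set js"
    using letter_outside_iff_word_used[OF assms(2)] less.prems by metis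
  show ?case
  proof (cases "2 \<in> set is")
    case False
    then have "set is \<subseteq> {0, 1}" "set js \<subseteq> {0, 1}"
      using used_iff less.prems(1,2) by auto
    then show ?thesis
      using map_letters_eq_imp_eq[OF assms(1)] less.prems(3) by (simp add: concat_letters)
  next
    case True
    obtain ks1 r1 where is_split: "is = ks1 @ 2 # r1" "set ks1 \<subseteq> {0, 1}" "set r1 \<subseteq> {0, 1, 2}"
      using split_at_first_2 True less.prems(1) by blast
    obtain ks2 r2 where js_split: "js = ks2 @ 2 # r2" "set ks2 \<subseteq> {0, 1}" "set r2 \<subseteq> {0, 1, 2}"
      using split_at_first_2 True used_iff less.prems(2) by blast
    obtain u x v where w: "w = u @ x # v" "set u \<subseteq> {a, b}" "x \<notin> {a, b}"
      using split_list_first_prop[of w "\<lambda>x. x \<notin> {a, b}"] assms(2) by blast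
    have "map ((!) [a, b]) ks1 @ u = map ((!) [a, b]) ks2 @ u"
      using less.prems(3) takeWhile_concat_letters_word[OF is_split(2) w, of r1]
        takeWhile_concat_letters_word[OF js_split(2) w, of r2]
      unfolding is_split(1) js_split(1) by simp
    then have ks: "ks1 = ks2"
      using map_letters_eq_imp_eq[OF assms(1) is_split(2) js_split(2)] by simp
    have "r1 = r2"
    proof (rule less.hyps)
      show "concat (map ((!) [[a], [b], w]) r1) = concat (map ((!) [[a], [b], w]) r2)"
        using less.prems(3) ks unfolding is_split(1) js_split(1) by simp
    qed (use is_split js_split in auto)
    then show ?thesis
      using is_split(1) js_split(1) ks by simp
  qed
qed

lemma is_code_letters_word_iff:
  "is_code [[a], [b], w] \<longleftrightarrow> a \<noteq> b \<and> \<not> set w \<subseteq> {a, b}"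
proof -
  have indices: "{..<length [[a], [b], w]} = {0, 1, 2 :: nat}"
    by auto
  show ?thesis
  proof
    assume "is_code [[a], [b], w]"
    then have decode: "is = js"
      if "is \<noteq> []" "js \<noteq> []" "set is \<subseteq> {0, 1, 2}" "set js \<subseteq> {0, 1, 2}"
        "concat (map ((!) [[a], [b], w]) is) = concat (map ((!) [[a], [b], w]) js)" for "is" js
      using that unfolding is_code_def indices by blast
    show "a \<noteq> b \<and> \<not> set w \<subseteq> {a, b}"
    proof (intro conjI notI)
      assume "a = b"
      then show False
        using decode[of "[0]" "[1]"] by simp
    next
      assume w: "set w \<subseteq> {a, b}"
      define ks where "ks = map (\<lambda>z. if z = a then 0 else 1 :: nat) w"
      have ks: "set ks \<subseteq> {0, 1}" "2 \<notin> set ks"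
        by (auto simp: ks_def)
      have "map ((!) [a, b]) ks = w"
        unfolding ks_def map_map by (rule map_idI) (use w in auto)
      then have "concat (map ((!) [[a], [b], w]) [0, 2]) = concat (map ((!) [[a], [b], w]) (0 # ks))"
        using concat_letters[OF ks(1), of a b w] by simp
      with ks(1) have "[0, 2] = 0 # ks"
        by (intro decode[of "[0, 2]" "0 # ks"]) auto
      then show False
        using ks(2) by auto
    qed
  next
    assume code_conditions: "a \<noteq> b \<and> \<not> set w \<subseteq> {a, b}"
    show "is_code [[a], [b], w]"
      unfolding is_code_def indices
    proof (intro allI impI)
      fix "is" js :: "nat list"
      assume "set is \<subseteq> {0, 1, 2}" "set js \<subseteq> {0, 1, 2}"
        "concat (map ((!) [[a], [b], w]) is) = concat (map ((!) [[a], [b], w]) js)"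
      with code_conditions show "is = js"
        by (intro letters_word_unique_decoding) auto
    qed
  qed
qed

lemma all_less_length_3: "(\<forall>i<length [x, y, z]. P i) \<longleftrightarrow> P 0 \<and> P 1 \<and> P 2"
  by (auto simp: less_Suc_eq numeral_2_eq_2)

lemma is_prefix_code_letters_word_iff:
  assumes "w \<noteq> []"
  shows "is_prefix_code [[a], [b], w] \<longleftrightarrow> a \<noteq> b \<and> hd w \<notin> {a, b}"
proof -
  obtain x v where "w = x # v"
    using assms by (cases w) auto
  then show ?thesis
    unfolding is_prefix_code_def all_less_length_3 by auto
qed

lemma UD_1_1_eq:
  "UD n [1, 1, c] = {[[a], [b], w] | a b w. a < n \<and> b < n \<and> a \<noteq> b \<and>
     set w \<subseteq> {..<n} \<and> length w = c \<and> \<not> set w \<subseteq> {a, b}}"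
proof -
  have shape: "length C = length [1, 1, c] \<and> (\<forall>i<length [1, 1, c]. length (C ! i) = [1, 1, c] ! i)
      \<longleftrightarrow> (\<exists>a b w. C = [[a], [b], w] \<and> length w = c)" for C :: "nat list list"
    unfolding all_less_length_3 by (auto simp: length_Suc_conv numeral_3_eq_3)
  show ?thesis
  proof (intro set_eqI)
    fix C
    have "C \<in> UD n [1, 1, c] \<longleftrightarrow> (\<exists>a b w. C = [[a], [b], w] \<and> length w = c) \<and>
        (\<forall>v\<in>set C. set v \<subseteq> {..<n}) \<and> is_code C"
      unfolding UD_def word_over_def mem_Collect_eq conj_assoc[symmetric] shape ..
    then show "C \<in> UD n [1, 1, c] \<longleftrightarrow> C \<in> {[[a], [b], w] | a b w. a < n \<and> b < n \<and> a \<noteq> b \<and>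
        set w \<subseteq> {..<n} \<and> length w = c \<and> \<not> set w \<subseteq> {a, b}}"
      by (auto simp: is_code_letters_word_iff)
  qed
qed

lemma PR_1_1_eq:
  assumes "c > 0"
  shows "PR n [1, 1, c] = {[[a], [b], w] | a b w. a < n \<and> b < n \<and> a \<noteq> b \<and>
     set w \<subseteq> {..<n} \<and> length w = c \<and> hd w \<notin> {a, b}}"
proof -
  have "hd w \<in> set w" if "length w = c" for w :: "nat list"
    using that assms by (cases w) auto
  then show ?thesis
    using assms unfolding PR_def UD_1_1_eq by (fastforce simp: is_prefix_code_letters_word_iff)
qed

lemma card_distinct_pairs: "card {(a, b). a < n \<and> b < n \<and> a \<noteq> (b :: nat)} = n * (n - 1)"
proof -
  have "{(a, b). a < n \<and> b < n \<and> a \<noteq> b} = (SIGMA a:{..<n}. {..<n} - {a})"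
    by auto
  then show ?thesis
    by simp
qed

lemma card_letters_word_triples:
  assumes "\<And>a b. a < n \<Longrightarrow> b < n \<Longrightarrow> a \<noteq> b \<Longrightarrow> finite {w. P a b w} \<and> card {w. P a b w} = k"
  shows "card {[[a], [b], w] | a b w. a < n \<and> b < n \<and> a \<noteq> b \<and> P a b w} = n * (n - 1) * k"
proof -
  let ?pairs = "{(a, b). a < n \<and> b < n \<and> a \<noteq> (b :: nat)}"
  let ?triple = "\<lambda>((a, b), w). [[a], [b], w]"
  have image: "{[[a], [b], w] | a b w. a < n \<and> b < n \<and> a \<noteq> b \<and> P a b w}
      = ?triple ` (SIGMA (a, b):?pairs. {w. P a b w})"
    by (auto simp: image_iff; force)
  have "card (?triple ` (SIGMA (a, b):?pairs. {w. P a b w})) = card (SIGMA (a, b):?pairs. {w. P a b w})"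
    by (rule card_image) (auto simp: inj_on_def)
  also have "\<dots> = (\<Sum>p\<in>?pairs. card {w. P (fst p) (snd p) w})"
  proof (subst card_SigmaI)
    show "finite ?pairs"
      by (rule finite_subset[of _ "{..<n} \<times> {..<n}"]) auto
  qed (use assms in \<open>auto simp: split_beta\<close>)
  also have "\<dots> = (\<Sum>p\<in>?pairs. k)"
    by (rule sum.cong) (use assms in auto)
  also have "\<dots> = n * (n - 1) * k"
    by (simp add: card_distinct_pairs)
  finally show ?thesis
    unfolding image .
qed

lemma card_lists_not_subset:
  assumes "finite A" "B \<subseteq> A"
  shows "card {w. set w \<subseteq> A \<and> length w = c \<and> \<not> set w \<subseteq> B} = card A ^ c - card B ^ c"
proof -
  have "{w. set w \<subseteq> A \<and> length w = c \<and> \<not> set w \<subseteq> B}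
      = {w. set w \<subseteq> A \<and> length w = c} - {w. set w \<subseteq> B \<and> length w = c}"
    using assms(2) by auto
  moreover have "{w. set w \<subseteq> B \<and> length w = c} \<subseteq> {w. set w \<subseteq> A \<and> length w = c}"
    using assms(2) by auto
  moreover have "finite B"
    using assms finite_subset by blast
  ultimately show ?thesis
    using assms(1) by (simp add: card_Diff_subset finite_lists_length_eq card_lists_length_eq)
qed

lemma card_lists_hd_notin:
  assumes "finite A"
  shows "card {w. set w \<subseteq> A \<and> length w = Suc m \<and> hd w \<notin> B} = card (A - B) * card A ^ m"
proof -
  have "{w. set w \<subseteq> A \<and> length w = Suc m \<and> hd w \<notin> B}
      = (\<lambda>(x, v). x # v) ` ((A - B) \<times> {v. set v \<subseteq> A \<and> length v = m})"
    by (auto simp: length_Suc_conv)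
  moreover have "inj_on (\<lambda>(x, v). x # v) ((A - B) \<times> {v. set v \<subseteq> A \<and> length v = m})"
    by (auto simp: inj_on_def)
  ultimately show ?thesis
    using assms by (simp add: card_image card_cartesian_product card_lists_length_eq)
qed

lemma card_UD_1_1: "card (UD n [1, 1, c]) = n * (n - 1) * (n ^ c - 2 ^ c)"
  unfolding UD_1_1_eq
proof (rule card_letters_word_triples)
  fix a b assume "a < n" "b < n" "a \<noteq> b"
  then have "{a, b} \<subseteq> {..<n}" "card {a, b} = 2"
    by auto
  moreover have "finite {w. set w \<subseteq> {..<n} \<and> length w = c \<and> \<not> set w \<subseteq> {a, b}}"
    by (rule finite_subset[OF _ finite_lists_length_eq[of "{..<n}" c]]) auto
  ultimately show "finite {w. set w \<subseteq> {..<n} \<and> length w = c \<and> \<not> set w \<subseteq> {a, b}}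
      \<and> card {w. set w \<subseteq> {..<n} \<and> length w = c \<and> \<not> set w \<subseteq> {a, b}} = n ^ c - 2 ^ c"
    by (simp add: card_lists_not_subset)
qed

lemma card_PR_1_1: "card (PR n [1, 1, Suc m]) = n * (n - 1) * ((n - 2) * n ^ m)"
  unfolding PR_1_1_eq[OF zero_less_Suc]
proof (rule card_letters_word_triples)
  fix a b assume "a < n" "b < n" "a \<noteq> b"
  then have "card ({..<n} - {a, b}) = n - 2"
    by (simp add: card_Diff_subset)
  moreover have "finite {w. set w \<subseteq> {..<n} \<and> length w = Suc m \<and> hd w \<notin> {a, b}}"
    by (rule finite_subset[OF _ finite_lists_length_eq[of "{..<n}" "Suc m"]]) auto
  ultimately show "finite {w. set w \<subseteq> {..<n} \<and> length w = Suc m \<and> hd w \<notin> {a, b}}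
      \<and> card {w. set w \<subseteq> {..<n} \<and> length w = Suc m \<and> hd w \<notin> {a, b}} = (n - 2) * n ^ m"
    using card_lists_hd_notin[of "{..<n}" m "{a, b}"] by simp
qed

lemma rho_1_1:
  assumes "n > 2"
  shows "rho n [1, 1, Suc m] = (real n - 2) / real n / (1 - (2 / real n) ^ Suc m)"
proof -
  have less: "2 ^ Suc m < n ^ Suc m"
    using assms by (intro power_strict_mono) auto
  then have words: "real (n ^ Suc m - 2 ^ Suc m) = real n ^ Suc m - 2 ^ Suc m"
    by (simp only: of_nat_diff less_imp_le of_nat_power of_nat_numeral)
  have words_pos: "real n ^ Suc m - 2 ^ Suc m > 0"
    using less by (metis diff_gt_0_iff_gt of_nat_less_iff of_nat_numeral of_nat_power)
  have "rho n [1, 1, Suc m] = (real n - 2) * real n ^ m / (real n ^ Suc m - 2 ^ Suc m)"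
    using assms unfolding rho_def card_UD_1_1 card_PR_1_1 of_nat_mult words
    by (simp add: of_nat_diff)
  also have "\<dots> = (real n - 2) / real n / (1 - (2 / real n) ^ Suc m)"
    using assms words_pos by (simp add: power_divide field_simps)
  finally show ?thesis .
qed

theorem theorem5:
  fixes n :: nat
  assumes "n > 2"
  shows "(\<lambda>c. rho n [1, 1, c]) \<longlonglongrightarrow> (real n - 2) / real n"
proof -
  have "norm (2 / real n) < 1"
    using assms by simp
  then have "(\<lambda>m. (2 / real n) ^ Suc m) \<longlonglongrightarrow> 0"
    by (intro LIMSEQ_Suc LIMSEQ_power_zero)
  then have "(\<lambda>m. (real n - 2) / real n / (1 - (2 / real n) ^ Suc m)) \<longlonglongrightarrow> (real n - 2) / real n / (1 - 0)"
    by (intro tendsto_intros) simp_all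
  then have "(\<lambda>m. rho n [1, 1, Suc m]) \<longlonglongrightarrow> (real n - 2) / real n"
    using rho_1_1[OF assms] by simp
  then show ?thesis
    by (rule filterlim_sequentially_Suc[THEN iffD1])
qed

end
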